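(* Consider two circular bodies in $\mathbb R^2$ of equal mass ($\mu_1=\mu_2=1/2$) and radii $R_1,R_2$, moving on elliptic Keplerian orbits about a fixed center and interacting only by elastic or inelastic collisions, as described in the context; let $D=R_1+R_2$. Let $\gamma=2L^2/D>1$ and $e=\gamma-\sqrt{\gamma^2-\gamma+1}$. If $$EL^2<-\frac{(1-e^2)(1+e)^2}{16e^2},$$ then the two bodies remain on elliptic orbits.
   Context: Units are chosen so that each body's center $\mathbf x_i\in\mathbb R^2$ moves, between collisions, with acceleration $-\mathbf x_i/|\mathbf x_i|^3$ (fixed attracting center at the origin; no mutual gravitation). Bodies have masses $m_1,m_2$, $\mu_i=m_i/(m_1+m_2)$. Specific energy $E_i=|\mathbf v_i|^2/2-1/|\mathbf x_i|$, signed specific angular momentum $L_i=x_{i,1}v_{i,2}-x_{i,2}v_{i,1}$; the orbit of body $i$ is elliptic iff $E_i<0$. Set $E=\mu_1E_1+\mu_2E_2$, $L=\mu_1L_1+\mu_2L_2$. A collision occurs when $|\mathbf x_1-\mathbf x_2|=D$ and $\mathbf n\cdot\mathbf w<0$, where $\mathbf n=(\mathbf x_1-\mathbf x_2)/D$, $\mathbf w=\mathbf v_1-\mathbf v_2$; then $\mathbf w'=(I-\mathbf n\otimes\mathbf n)\mathbf w-(1-2\varepsilon)(\mathbf n\otimes\mathbf n)\mathbf w$ with $\varepsilon\in[0,1/2]$ ($\varepsilon=0$ elastic), and with $\mathbf v=\mu_1\mathbf v_1+\mu_2\mathbf v_2$ the outgoing velocities are $\mathbf v_1'=\mathbf v+\mu_2\mathbf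 w'$, $\mathbf v_2'=\mathbf v-\mu_1\mathbf w'$. *)

theory Defs
  imports "HOL-Analysis.Analysis"
begin

definition kepler_acc :: "real^2 \<Rightarrow> real^2" where
  "kepler_acc x = - ((1 / norm x ^ 3) *\<^sub>R x)"

definition spec_energy :: "real^2 \<Rightarrow> real^2 \<Rightarrow> real" where
  "spec_energy x v = norm v ^ 2 / 2 - 1 / norm x"

definition ang_mom :: "real^2 \<Rightarrow> real^2 \<Rightarrow> real" where
  "ang_mom x v = x$1 * v$2 - x$2 * v$1"

definition collide_w :: "real \<Rightarrow> real^2 \<Rightarrow> real^2 \<Rightarrow> real^2" where
  "collide_w eps n w = (w - (n \<bullet> w) *\<^sub>R n) - ((1 - 2 * eps) * (n \<bullet> w)) *\<^sub>R n"

definition motion ::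
  "real \<Rightarrow> real \<Rightarrow> real \<Rightarrow> real \<Rightarrow> (real \<Rightarrow> real^2) \<Rightarrow> (real \<Rightarrow> real^2)
     \<Rightarrow> (real \<Rightarrow> real^2) \<Rightarrow> (real \<Rightarrow> real^2) \<Rightarrow> bool" where
  "motion m1 m2 D eps x1 v1 x2 v2 \<longleftrightarrow>
    (let mu1 = m1 / (m1 + m2); mu2 = m2 / (m1 + m2) in
     \<exists>C :: real set. C \<subseteq> {0<..} \<and> (\<forall>T. finite (C \<inter> {..T})) \<and>
       continuous_on {0..} x1 \<and> continuous_on {0..} x2 \<and>
       (\<forall>t\<ge>0. x1 t \<noteq> 0 \<and> x2 t \<noteq> 0 \<and> dist (x1 t) (x2 t) \<ge> D) \<and>
       (\<forall>t. t \<ge> 0 \<and> t \<notin> C \<longrightarrow>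
          (x1 has_vector_derivative v1 t) (at t within {0..}) \<and>
          (v1 has_vector_derivative kepler_acc (x1 t)) (at t within {0..}) \<and>
          (x2 has_vector_derivative v2 t) (at t within {0..}) \<and>
          (v2 has_vector_derivative kepler_acc (x2 t)) (at t within {0..})) \<and>
       (\<forall>t\<in>C. \<exists>u1 u2.
          (v1 \<longlongrightarrow> u1) (at_left t) \<and> (v2 \<longlongrightarrow> u2) (at_left t) \<and>
          (v1 \<longlongrightarrow> v1 t) (at_right t) \<and> (v2 \<longlongrightarrow> v2 t) (at_right t) \<and>
          dist (x1 t) (x2 t) = D \<and>
          (let n = (1 / D) *\<^sub>R (x1 t - x2 t); w = u1 - u2; w' = collide_w eps n w;
               v = mu1 *\<^sub>R u1 + mu2 *\<^sub>R u2
           in n \<bullet> w < 0 \<and> v1 t = v + mu2 *\<^sub>R w' \<and> v2 t = v - mu1 *\<^sub>R w')))"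

end

theory Submission
  imports Defs
begin

(*
  Along a Kepler arc the energy and angular momentum of each body are conserved. A collision
  of equal masses adds opposite impulses k n and -k n along the line of centres n; this keeps
  L1 + L2 fixed and, if the impulse is switched on linearly, the energy E1 + E2 never rises
  above its value before the collision. Hence the mean energy stays at most E and the mean angular
  momentum stays equal to L for all times.

  Suppose that at some such state, with the bodies at distance at most D, one orbit is
  parabolic, say E1 = 0. Then L1^2 <= 2 r1 <= 2 (r2 + D) and L2^2 <= 2 r2 + 2 r2^2 E2, and
  2 |L| <= |L1| + |L2|. A weighted Cauchy-Schwarz inequality with weights 1 : e gives a lower
  bound on E2 quadratic in 1/r2; minimising it over r2, with e chosen so that
  D (1 - e^2) = 2 L^2 (1 - 2 e), yields E L^2 >= -(1 - e^2)(1 + e)^2 / (16 e^2). So under the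
  hypothesis no energy can reach 0, and by continuity both stay negative: between collisions
  because they are constant, across a collision along the interpolated impulse.
*)

section \<open>An inequality for parabolic states\<close>

lemma weighted_square_sum_le:
  fixes p q e :: real
  assumes "0 < e"
  shows "e * (p + q)\<^sup>2 \<le> (1 + e) * (e * p\<^sup>2 + q\<^sup>2)"
proof -
  have "(1 + e) * (e * p\<^sup>2 + q\<^sup>2) - e * (p + q)\<^sup>2 = (e * p - q)\<^sup>2"
    by (simp add: power2_eq_square algebra_simps)
  then show ?thesis
    by (metis diff_ge_0_iff_ge zero_le_power2)
qed

lemma quadratic_lower_bound:
  fixes R a r E :: real
  assumes "0 < R" and "R \<le> 2 * a * r + 2 * r\<^sup>2 * E"
  shows "- a\<^sup>2 / (2 * R) \<le> E"
proof -
  have "0 \<le> (R - a * r)\<^sup>2" by simp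
  also have "\<dots> \<le> r\<^sup>2 * (a\<^sup>2 + 2 * R * E)"
    using mult_left_mono[OF assms(2), of R] assms(1) by (simp add: power2_eq_square algebra_simps)
  finally have "0 \<le> a\<^sup>2 + 2 * R * E"
    using assms by (cases "r = 0") (auto simp: zero_le_mult_iff)
  then show ?thesis
    using assms(1) by (simp add: field_simps)
qed

lemma parabolic_energy_bound:
  fixes p q r E l e D :: real
  assumes e: "0 < e" "e < 1" and l: "0 < l" and D: "D * (1 - e\<^sup>2) = 2 * l\<^sup>2 * (1 - 2 * e)"
    and p: "p\<^sup>2 \<le> 2 * r + 2 * D" and q: "q\<^sup>2 \<le> 2 * r + 2 * r\<^sup>2 * E"
    and pq: "2 * l \<le> p + q"
  shows "- E / 2 * l\<^sup>2 \<le> (1 - e\<^sup>2) * (1 + e)\<^sup>2 / (16 * e\<^sup>2)"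
proof -
  define R where "R = 4 * e\<^sup>2 * l\<^sup>2 / (1 - e\<^sup>2)"
  have e2: "0 < 1 - e\<^sup>2"
    using e by (simp add: power_less_one_iff abs_less_iff)
  have R: "0 < R"
    unfolding R_def using e l e2 by simp
  have R_eq: "(1 + e) * R = 4 * e * l\<^sup>2 - (1 + e) * (2 * e * D)"
  proof -
    have "(1 - e) * ((1 + e) * R) = R * (1 - e\<^sup>2)"
      by (simp add: power2_eq_square algebra_simps)
    also have "\<dots> = 4 * e\<^sup>2 * l\<^sup>2"
      unfolding R_def using e2 by simp
    also have "\<dots> = 4 * e * l\<^sup>2 * (1 - e) - 2 * e * (2 * l\<^sup>2 * (1 - 2 * e))"
      by (simp add: power2_eq_square algebra_simps)
    also have "\<dots> = (1 - e) * (4 * e * l\<^sup>2 - (1 + e) * (2 * e * D))"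
      unfolding D[symmetric] by (simp add: power2_eq_square algebra_simps)
    finally show ?thesis
      using e by simp
  qed
  have "(2 * l)\<^sup>2 \<le> (p + q)\<^sup>2"
    using pq l by (intro power_mono) auto
  then have "4 * e * l\<^sup>2 \<le> e * (p + q)\<^sup>2"
    using e by (simp add: power_mult_distrib)
  also have "\<dots> \<le> (1 + e) * (e * p\<^sup>2 + q\<^sup>2)"
    using e(1) by (rule weighted_square_sum_le)
  also have "\<dots> \<le> (1 + e) * (2 * e * D + (2 * (1 + e) * r + 2 * r\<^sup>2 * E))"
    using e q mult_left_mono[OF p, of e] by (intro mult_left_mono) (auto simp: algebra_simps)
  finally have "(1 + e) * R \<le> (1 + e) * (2 * (1 + e) * r + 2 * r\<^sup>2 * E)"
    unfolding R_eq by (simp add: algebra_simps)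
  then have "R \<le> 2 * (1 + e) * r + 2 * r\<^sup>2 * E"
    using e by simp
  then have "- (1 + e)\<^sup>2 / (2 * R) \<le> E"
    by (rule quadratic_lower_bound[OF R])
  then have "- (1 + e)\<^sup>2 \<le> 2 * R * E"
    using R by (simp add: field_simps)
  then have "- (1 + e)\<^sup>2 * l\<^sup>2 \<le> 2 * R * E * l\<^sup>2"
    by (rule mult_right_mono) simp
  then have "- E / 2 * l\<^sup>2 \<le> (1 + e)\<^sup>2 * l\<^sup>2 / (4 * R)"
    using R by (simp add: field_simps)
  also have "\<dots> = (1 - e\<^sup>2) * (1 + e)\<^sup>2 / (16 * e\<^sup>2)"
    unfolding R_def using e l e2 by (simp add: field_simps power2_eq_square)
  finally show ?thesis .
qed

lemma ang_mom_sq_add_inner_sq: "(ang_mom x v)\<^sup>2 + (x \<bullet> v)\<^sup>2 = (norm x)\<^sup>2 * (norm v)\<^sup>2"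
  unfolding ang_mom_def power2_norm_eq_inner by (simp add: inner_vec_def sum_2 power2_eq_square algebra_simps)

lemma ang_mom_sq_le: "(ang_mom x v)\<^sup>2 \<le> (norm x)\<^sup>2 * (norm v)\<^sup>2"
  by (metis ang_mom_sq_add_inner_sq le_add_same_cancel1 zero_le_power2)

lemma ang_mom_sq_le_energy:
  assumes "x \<noteq> 0"
  shows "(ang_mom x v)\<^sup>2 \<le> 2 * norm x + 2 * (norm x)\<^sup>2 * spec_energy x v"
proof -
  have "(norm x)\<^sup>2 * (norm v)\<^sup>2 = 2 * norm x + 2 * (norm x)\<^sup>2 * spec_energy x v"
    using assms by (simp add: spec_energy_def power2_eq_square field_simps)
  then show ?thesis
    using ang_mom_sq_le[of x v] by simp
qed

lemma parabolic_collision_energy_bound: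
  fixes y1 y2 u1 u2 :: "real^2" and D L e :: real
  assumes y: "norm (y1 - y2) \<le> D" "y1 \<noteq> 0" "y2 \<noteq> 0" and parabolic: "spec_energy y1 u1 = 0"
    and e: "0 < e" "e < 1" and L: "L \<noteq> 0" "D * (1 - e\<^sup>2) = 2 * L\<^sup>2 * (1 - 2 * e)"
    and L_def: "L = (1/2) * ang_mom y1 u1 + (1/2) * ang_mom y2 u2"
  shows "- ((1 - e\<^sup>2) * (1 + e)\<^sup>2) / (16 * e\<^sup>2)
    \<le> ((1/2) * spec_energy y1 u1 + (1/2) * spec_energy y2 u2) * L\<^sup>2"
proof -
  have "norm y1 \<le> norm y2 + D"
    using y(1) norm_triangle_sub[of y1 y2] by linarith
  moreover have "\<bar>ang_mom y1 u1\<bar>\<^sup>2 \<le> 2 * norm y1"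
    using ang_mom_sq_le_energy[OF y(2), of u1] unfolding parabolic by simp
  ultimately have p: "\<bar>ang_mom y1 u1\<bar>\<^sup>2 \<le> 2 * norm y2 + 2 * D"
    by linarith
  have q: "\<bar>ang_mom y2 u2\<bar>\<^sup>2 \<le> 2 * norm y2 + 2 * (norm y2)\<^sup>2 * spec_energy y2 u2"
    using ang_mom_sq_le_energy[OF y(3)] by simp
  have "2 * \<bar>L\<bar> \<le> \<bar>ang_mom y1 u1\<bar> + \<bar>ang_mom y2 u2\<bar>"
    unfolding L_def by (simp add: abs_if)
  moreover have "0 < \<bar>L\<bar>" "D * (1 - e\<^sup>2) = 2 * \<bar>L\<bar>\<^sup>2 * (1 - 2 * e)"
    using L by simp_all
  ultimately have "- spec_energy y2 u2 / 2 * \<bar>L\<bar>\<^sup>2 \<le> (1 - e\<^sup>2) * (1 + e)\<^sup>2 / (16 * e\<^sup>2)"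
    using parabolic_energy_bound[OF e _ _ p q] by blast
  then show ?thesis
    unfolding parabolic minus_divide_left[symmetric] by simp
qed

lemma no_parabolic_state:
  fixes y1 y2 u1 u2 :: "real^2" and D E L e :: real
  assumes y: "norm (y1 - y2) \<le> D" "y1 \<noteq> 0" "y2 \<noteq> 0"
    and e: "0 < e" "e < 1" and L: "L \<noteq> 0" "D * (1 - e\<^sup>2) = 2 * L\<^sup>2 * (1 - 2 * e)"
    and EL: "E * L\<^sup>2 < - ((1 - e\<^sup>2) * (1 + e)\<^sup>2) / (16 * e\<^sup>2)"
    and E_ge: "(1/2) * spec_energy y1 u1 + (1/2) * spec_energy y2 u2 \<le> E"
    and L_eq: "(1/2) * ang_mom y1 u1 + (1/2) * ang_mom y2 u2 = L"
  shows "spec_energy y1 u1 \<noteq> 0 \<and> spec_energy y2 u2 \<noteq> 0"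
proof -
  have "((1/2) * spec_energy y1 u1 + (1/2) * spec_energy y2 u2) * L\<^sup>2 \<le> E * L\<^sup>2"
    using E_ge by (rule mult_right_mono) simp
  then have "((1/2) * spec_energy y1 u1 + (1/2) * spec_energy y2 u2) * L\<^sup>2
      < - ((1 - e\<^sup>2) * (1 + e)\<^sup>2) / (16 * e\<^sup>2)"
    using EL by linarith
  moreover have "norm (y2 - y1) \<le> D"
    using y(1) by (simp add: norm_minus_commute)
  ultimately show ?thesis
    using parabolic_collision_energy_bound[OF y _ e L L_eq[symmetric]]
      parabolic_collision_energy_bound[of y2 y1 D u2 e L u1] y e L L_eq
    by (auto simp: algebra_simps)
qed

section \<open>Collisions of equal masses\<close>

lemma neg_if_no_zero_on_Icc:
  fixes f :: "real \<Rightarrow> real"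
  assumes "continuous_on {a..b} f" "a \<le> b" "f a < 0" "\<And>s. s \<in> {a..b} \<Longrightarrow> f s \<noteq> 0"
  shows "f b < 0"
  using IVT'[of f a 0 b] assms by force

definition post_collision ::
  "real \<Rightarrow> real \<Rightarrow> real \<Rightarrow> real \<Rightarrow> real^2 \<Rightarrow> real^2 \<Rightarrow> real^2 \<Rightarrow> real^2 \<Rightarrow> (real^2) \<times> (real^2)" where
  "post_collision m1 m2 D eps y1 y2 u1 u2 =
    (let mu1 = m1 / (m1 + m2); mu2 = m2 / (m1 + m2); n = (1 / D) *\<^sub>R (y1 - y2);
         w' = collide_w eps n (u1 - u2); v = mu1 *\<^sub>R u1 + mu2 *\<^sub>R u2
     in (v + mu2 *\<^sub>R w', v - mu1 *\<^sub>R w'))"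

lemma post_collision_equal_masses:
  fixes y1 y2 u1 u2 :: "real^2" and m D eps :: real
  assumes "m > 0"
  defines "n \<equiv> (1 / D) *\<^sub>R (y1 - y2)"
  defines "k \<equiv> - (1 - eps) * (n \<bullet> (u1 - u2))"
  shows "post_collision m m D eps y1 y2 u1 u2 = (u1 + k *\<^sub>R n, u2 - k *\<^sub>R n)"
proof -
  have collide: "collide_w eps n (u1 - u2) = (u1 - u2) + (2 * k) *\<^sub>R n"
    unfolding collide_w_def k_def by (simp add: vec_eq_iff algebra_simps)
  have mu: "m / (m + m) = 1 / 2"
    using assms(1) by simp
  show ?thesis
    unfolding post_collision_def Let_def n_def[symmetric] collide mu
    by (simp add: vec_eq_iff field_simps)
qed

lemma ang_mom_sum_normal_impulse:
  "ang_mom y1 (u1 + c *\<^sub>R (y1 - y2)) + ang_mom y2 (u2 - c *\<^sub>R (y1 - y2))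
    = ang_mom y1 u1 + ang_mom y2 u2"
  unfolding ang_mom_def by (simp add: algebra_simps)

lemma energy_sum_along_collision:
  fixes y1 y2 u1 u2 n :: "real^2"
  assumes "norm n = 1" "0 \<le> eps" "eps \<le> 1" "0 \<le> s" "s \<le> 1"
    and k: "k = - (1 - eps) * (n \<bullet> (u1 - u2))"
  shows "spec_energy y1 (u1 + (s * k) *\<^sub>R n) + spec_energy y2 (u2 - (s * k) *\<^sub>R n)
    \<le> spec_energy y1 u1 + spec_energy y2 u2"
proof -
  define c where "c = n \<bullet> (u1 - u2)"
  have nn: "n \<bullet> n = 1"
    using assms(1) by (simp add: norm_eq_sqrt_inner)
  have "(norm (u1 + (s * k) *\<^sub>R n))\<^sup>2 + (norm (u2 - (s * k) *\<^sub>R n))\<^sup>2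
      = (norm u1)\<^sup>2 + (norm u2)\<^sup>2 - 2 * s * (1 - eps) * c\<^sup>2 * (1 - s * (1 - eps))"
    unfolding k c_def power2_norm_eq_inner
    by (simp add: nn inner_commute power2_eq_square algebra_simps)
  moreover have "0 \<le> s * (1 - eps) * c\<^sup>2 * (1 - s * (1 - eps))"
    using assms(2-5) mult_le_one[of s "1 - eps"] by simp
  ultimately show ?thesis
    unfolding spec_energy_def by simp
qed

definition elliptic_state :: "real \<Rightarrow> real \<Rightarrow> real \<Rightarrow> real \<Rightarrow> real \<Rightarrow> real \<Rightarrow> bool" where
  "elliptic_state E L E1 E2 L1 L2 \<longleftrightarrow>
    (1/2) * E1 + (1/2) * E2 \<le> E \<and> (1/2) * L1 + (1/2) * L2 = L \<and> E1 < 0 \<and> E2 < 0"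

lemma collision_keeps_elliptic:
  fixes y1 y2 u1 u2 w1 w2 :: "real^2" and m D eps E L e :: real
  assumes y: "dist y1 y2 = D" "y1 \<noteq> 0" "y2 \<noteq> 0"
    and m: "0 < m" and D: "0 < D" and eps: "0 \<le> eps" "eps \<le> 1"
    and e: "0 < e" "e < 1" and L: "L \<noteq> 0" "D * (1 - e\<^sup>2) = 2 * L\<^sup>2 * (1 - 2 * e)"
    and EL: "E * L\<^sup>2 < - ((1 - e\<^sup>2) * (1 + e)\<^sup>2) / (16 * e\<^sup>2)"
    and post: "(w1, w2) = post_collision m m D eps y1 y2 u1 u2"
    and pre: "elliptic_state E L (spec_energy y1 u1) (spec_energy y2 u2) (ang_mom y1 u1) (ang_mom y2 u2)"
  shows "elliptic_state E L (spec_energy y1 w1) (spec_energy y2 w2) (ang_mom y1 w1) (ang_mom y2 w2)"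
proof -
  define n where "n = (1 / D) *\<^sub>R (y1 - y2)"
  define k where "k = - (1 - eps) * (n \<bullet> (u1 - u2))"
  define p1 where "p1 s = u1 + (s * k) *\<^sub>R n" for s
  define p2 where "p2 s = u2 - (s * k) *\<^sub>R n" for s
  have "(w1, w2) = (p1 1, p2 1)"
    unfolding post post_collision_equal_masses[OF m] p1_def p2_def n_def k_def by simp
  then have w: "w1 = p1 1" "w2 = p2 1"
    by simp_all
  have "norm n = 1"
    using y(1) D by (simp add: n_def dist_norm)
  then have E_path: "(1/2) * spec_energy y1 (p1 s) + (1/2) * spec_energy y2 (p2 s) \<le> E"
    if "0 \<le> s" "s \<le> 1" for s
    using energy_sum_along_collision[OF _ eps that k_def, of y1 y2] pre
    unfolding p1_def p2_def elliptic_state_def by linarith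
  have L_path: "(1/2) * ang_mom y1 (p1 s) + (1/2) * ang_mom y2 (p2 s) = L" for s
    using ang_mom_sum_normal_impulse[of y1 u1 "s * k / D" y2 u2] pre
    unfolding p1_def p2_def n_def elliptic_state_def by simp
  have no_root: "spec_energy y1 (p1 s) \<noteq> 0" "spec_energy y2 (p2 s) \<noteq> 0" if "s \<in> {0..1}" for s
    using no_parabolic_state[OF _ y(2,3) e L EL E_path L_path] y(1) that
    by (simp_all add: dist_norm)
  have "continuous_on {0..1} (\<lambda>s. spec_energy y1 (p1 s))"
    "continuous_on {0..1} (\<lambda>s. spec_energy y2 (p2 s))"
    unfolding p1_def p2_def spec_energy_def by (auto intro!: continuous_intros)
  moreover have "spec_energy y1 (p1 0) < 0" "spec_energy y2 (p2 0) < 0"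
    using pre by (simp_all add: p1_def p2_def elliptic_state_def)
  ultimately have "spec_energy y1 (p1 1) < 0" "spec_energy y2 (p2 1) < 0"
    by (auto intro: neg_if_no_zero_on_Icc dest: no_root)
  then show ?thesis
    using E_path[of 1] L_path[of 1] unfolding w elliptic_state_def by simp
qed

section \<open>First integrals of the Kepler flow\<close>

definition kepler_first_integral :: "(real^2 \<Rightarrow> real^2 \<Rightarrow> real) \<Rightarrow> bool" where
  "kepler_first_integral F \<longleftrightarrow>
    (\<forall>y u. y \<noteq> 0 \<longrightarrow> isCont (\<lambda>p. F (fst p) (snd p)) (y, u)) \<and>
    (\<forall>(x :: real \<Rightarrow> real^2) v t S. (x has_vector_derivative v t) (at t within S) \<longrightarrow>
       (v has_vector_derivative kepler_acc (x t)) (at t within S) \<longrightarrow> x t \<noteq> 0 \<longrightarrow>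
       ((\<lambda>s. F (x s) (v s)) has_real_derivative 0) (at t within S))"

lemma has_real_derivative_inner_self:
  fixes v :: "real \<Rightarrow> 'a :: real_inner"
  assumes "(v has_vector_derivative v') (at t within S)"
  shows "((\<lambda>s. v s \<bullet> v s) has_real_derivative 2 * (v t \<bullet> v')) (at t within S)"
proof -
  have "((\<lambda>s. v s \<bullet> v s) has_derivative (\<lambda>h. v t \<bullet> (h *\<^sub>R v') + (h *\<^sub>R v') \<bullet> v t)) (at t within S)"
    using has_derivative_inner[OF assms[unfolded has_vector_derivative_def]
        assms[unfolded has_vector_derivative_def]] .
  moreover have "(\<lambda>h. v t \<bullet> (h *\<^sub>R v') + (h *\<^sub>R v') \<bullet> v t) = (*) (2 * (v t \<bullet> v'))"
    by (auto simp: fun_eq_iff inner_commute)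
  ultimately show ?thesis
    unfolding has_field_derivative_def by simp
qed

lemma has_real_derivative_norm:
  fixes x :: "real \<Rightarrow> 'a :: real_inner"
  assumes "(x has_vector_derivative x') (at t within S)" "x t \<noteq> 0"
  shows "((\<lambda>s. norm (x s)) has_real_derivative (x t \<bullet> x') / norm (x t)) (at t within S)"
proof -
  have "((\<lambda>s. norm (x s)) has_derivative (\<lambda>h. sgn (x t) \<bullet> (h *\<^sub>R x'))) (at t within S)"
    using has_derivative_compose[OF assms(1)[unfolded has_vector_derivative_def] has_derivative_norm[OF assms(2)]]
    by (simp add: o_def inner_commute)
  moreover have "(\<lambda>h. sgn (x t) \<bullet> (h *\<^sub>R x')) = (*) ((x t \<bullet> x') / norm (x t))"
    by (auto simp: fun_eq_iff sgn_div_norm inner_commute field_simps)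
  ultimately show ?thesis
    unfolding has_field_derivative_def by simp
qed

lemma spec_energy_kepler_has_real_derivative:
  fixes x v :: "real \<Rightarrow> real^2"
  assumes dx: "(x has_vector_derivative v t) (at t within S)"
    and dv: "(v has_vector_derivative kepler_acc (x t)) (at t within S)" and x0: "x t \<noteq> 0"
  shows "((\<lambda>s. spec_energy (x s) (v s)) has_real_derivative 0) (at t within S)"
proof -
  define r where "r = norm (x t)"
  have r: "r \<noteq> 0"
    using x0 by (simp add: r_def)
  have acc: "v t \<bullet> kepler_acc (x t) = - (x t \<bullet> v t) / r ^ 3"
    by (simp add: kepler_acc_def inner_commute r_def)
  have "((\<lambda>s. (v s \<bullet> v s) / 2 - inverse (norm (x s))) has_real_derivative
      2 * (v t \<bullet> kepler_acc (x t)) / 2 - (- ((x t \<bullet> v t) / r * inverse (r ^ Suc (Suc 0)))))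
      (at t within S)"
    unfolding r_def using x0
    by (intro DERIV_diff DERIV_cdivide DERIV_inverse_fun has_real_derivative_inner_self dv
        has_real_derivative_norm dx) simp_all
  moreover have "2 * (v t \<bullet> kepler_acc (x t)) / 2 - (- ((x t \<bullet> v t) / r * inverse (r ^ Suc (Suc 0)))) = 0"
    using r unfolding acc by (simp add: field_simps eval_nat_numeral)
  moreover have "(\<lambda>s. spec_energy (x s) (v s)) = (\<lambda>s. (v s \<bullet> v s) / 2 - inverse (norm (x s)))"
    unfolding spec_energy_def power2_norm_eq_inner inverse_eq_divide ..
  ultimately show ?thesis
    by (simp only:)
qed

lemma ang_mom_kepler_has_real_derivative:
  fixes x v :: "real \<Rightarrow> real^2"
  assumes "(x has_vector_derivative v t) (at t within S)"
    and "(v has_vector_derivative kepler_acc (x t)) (at t within S)"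
  shows "((\<lambda>s. ang_mom (x s) (v s)) has_real_derivative 0) (at t within S)"
  using assms bounded_linear.has_derivative[OF bounded_linear_vec_nth]
  unfolding has_real_derivative_iff_has_vector_derivative has_vector_derivative_def ang_mom_def
  by (auto intro!: derivative_eq_intros simp: kepler_acc_def algebra_simps)

lemma kepler_first_integral_spec_energy: "kepler_first_integral spec_energy"
  unfolding kepler_first_integral_def spec_energy_def[abs_def]
  using spec_energy_kepler_has_real_derivative[unfolded spec_energy_def]
  by (auto intro!: continuous_intros)

lemma kepler_first_integral_ang_mom: "kepler_first_integral ang_mom"
  unfolding kepler_first_integral_def
  using ang_mom_kepler_has_real_derivative by (auto simp: ang_mom_def intro!: continuous_intros)

lemma kepler_first_integral_tendsto:
  assumes "kepler_first_integral F" "(X \<longlongrightarrow> y) G" "(V \<longlongrightarrow> u) G" "y \<noteq> 0"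
  shows "((\<lambda>s. F (X s) (V s)) \<longlongrightarrow> F y u) G"
  using isCont_tendsto_compose[OF _ tendsto_Pair[OF assms(2,3)], of "\<lambda>p. F (fst p) (snd p)"] assms(1,4)
  unfolding kepler_first_integral_def by simp

lemma tendsto_at_right_of_within_atLeast:
  fixes t a :: real
  assumes "(f \<longlongrightarrow> l) (at t within {a..})" "a \<le> t"
  shows "(f \<longlongrightarrow> l) (at_right t)"
proof -
  have "{t<..} \<subseteq> {a..}"
    using assms(2) by auto
  then show ?thesis
    using tendsto_within_subset[OF assms(1)] by blast
qed

lemma tendsto_at_left_of_within_atLeast:
  fixes t a :: real
  assumes "(f \<longlongrightarrow> l) (at t within {a..})" "a < t"
  shows "(f \<longlongrightarrow> l) (at_left t)"
  using tendsto_within_subset[OF assms(1), of "{a..t}"] assms(2)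
  by (auto simp: at_within_Icc_at_left)

lemma tendsto_at_left_unique_of_const:
  fixes f :: "real \<Rightarrow> 'a :: t2_space"
  assumes "a < b" "\<And>s. a < s \<Longrightarrow> s < b \<Longrightarrow> f s = c" "(f \<longlongrightarrow> l) (at_left b)"
  shows "l = c"
proof -
  have "eventually (\<lambda>s. c = f s) (at_left b)"
    using eventually_at_left_real[OF assms(1)] by eventually_elim (use assms(2) in auto)
  then have "(f \<longlongrightarrow> c) (at_left b)"
    by (rule Lim_transform_eventually[OF tendsto_const])
  then show ?thesis
    using tendsto_unique[OF _ assms(3)] trivial_limit_at_left_real by blast
qed

lemma tendsto_at_right_unique_of_const:
  fixes f :: "real \<Rightarrow> 'a :: t2_space"
  assumes "a < b" "\<And>s. a < s \<Longrightarrow> s < b \<Longrightarrow> f s = c" "(f \<longlongrightarrow> l) (at_right a)"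
  shows "l = c"
proof -
  have "eventually (\<lambda>s. c = f s) (at_right a)"
    using eventually_at_right_real[OF assms(1)] by eventually_elim (use assms(2) in auto)
  then have "(f \<longlongrightarrow> c) (at_right a)"
    by (rule Lim_transform_eventually[OF tendsto_const])
  then show ?thesis
    using tendsto_unique[OF _ assms(3)] trivial_limit_at_right_real by blast
qed

locale kepler_body =
  fixes C :: "real set" and x v :: "real \<Rightarrow> real^2"
  assumes continuous: "continuous_on {0..} x"
    and nonzero: "\<And>t. 0 \<le> t \<Longrightarrow> x t \<noteq> 0"
    and ode: "\<And>t. 0 \<le> t \<Longrightarrow> t \<notin> C \<Longrightarrow>
      (x has_vector_derivative v t) (at t within {0..}) \<and>
      (v has_vector_derivative kepler_acc (x t)) (at t within {0..})"
begin

lemma x_tendsto: "0 \<le> t \<Longrightarrow> (x \<longlongrightarrow> x t) (at t within {0..})"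
  using continuous unfolding continuous_on_def by simp

lemma v_tendsto: "0 \<le> t \<Longrightarrow> t \<notin> C \<Longrightarrow> (v \<longlongrightarrow> v t) (at t within {0..})"
  using has_vector_derivative_continuous[OF ode[THEN conjunct2]] by (simp add: continuous_within)

lemma first_integral_const:
  assumes F: "kepler_first_integral F" and a: "0 \<le> a" and no_C: "\<And>s. a < s \<Longrightarrow> s < b \<Longrightarrow> s \<notin> C"
  obtains c where "\<And>s. a < s \<Longrightarrow> s < b \<Longrightarrow> F (x s) (v s) = c"
proof -
  have "((\<lambda>s. F (x s) (v s)) has_real_derivative 0) (at s within {a<..<b})" if "s \<in> {a<..<b}" for s
  proof (rule DERIV_subset)
    show "((\<lambda>s. F (x s) (v s)) has_real_derivative 0) (at s within {0..})"
      using F ode[of s] nonzero[of s] no_C[of s] a that unfolding kepler_first_integral_def by auto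
  qed (use a in auto)
  then obtain c where "\<forall>s\<in>{a<..<b}. F (x s) (v s) = c"
    using has_field_derivative_zero_constant[of "{a<..<b}"] by blast
  then show ?thesis
    using that by auto
qed

lemma first_integral_left_limit:
  assumes F: "kepler_first_integral F" and ab: "0 \<le> a" "a < b"
    and no_C: "\<And>s. a < s \<Longrightarrow> s < b \<Longrightarrow> s \<notin> C"
    and u: "(v \<longlongrightarrow> u) (at_left b)" and s: "a < s" "s < b"
  shows "F (x b) u = F (x s) (v s)"
proof -
  obtain c where c: "\<And>s. a < s \<Longrightarrow> s < b \<Longrightarrow> F (x s) (v s) = c"
    using first_integral_const[OF F ab(1) no_C] by blast
  have "((\<lambda>s. F (x s) (v s)) \<longlongrightarrow> F (x b) u) (at_left b)"
    using kepler_first_integral_tendsto[OF F tendsto_at_left_of_within_atLeast[OF x_tendsto] u]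
      nonzero ab by simp
  then have "F (x b) u = c"
    using tendsto_at_left_unique_of_const[where f = "\<lambda>s. F (x s) (v s)", OF ab(2) c] by blast
  then show ?thesis
    using c s by simp
qed

lemma first_integral_right_limit:
  assumes F: "kepler_first_integral F" and ab: "0 \<le> a" "a < b"
    and no_C: "\<And>s. a < s \<Longrightarrow> s < b \<Longrightarrow> s \<notin> C"
    and u: "(v \<longlongrightarrow> u) (at_right a)" and s: "a < s" "s < b"
  shows "F (x a) u = F (x s) (v s)"
proof -
  obtain c where c: "\<And>s. a < s \<Longrightarrow> s < b \<Longrightarrow> F (x s) (v s) = c"
    using first_integral_const[OF F ab(1) no_C] by blast
  have "((\<lambda>s. F (x s) (v s)) \<longlongrightarrow> F (x a) u) (at_right a)"
    using kepler_first_integral_tendsto[OF F tendsto_at_right_of_within_atLeast[OF x_tendsto] u]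
      nonzero ab by simp
  then have "F (x a) u = c"
    using tendsto_at_right_unique_of_const[where f = "\<lambda>s. F (x s) (v s)", OF ab(2) c] by blast
  then show ?thesis
    using c s by simp
qed

lemma first_integral_flow:
  assumes F: "kepler_first_integral F" and at: "0 \<le> a" "a \<le> t"
    and no_C: "\<And>s. a < s \<Longrightarrow> s \<le> t \<Longrightarrow> s \<notin> C"
    and right_cont: "(v \<longlongrightarrow> v a) (at_right a)"
  shows "F (x t) (v t) = F (x a) (v a)"
proof (cases "a = t")
  case False
  define m where "m = (a + t) / 2"
  have "a < t" "a < m" "m < t"
    using at False by (auto simp: m_def)
  moreover have "(v \<longlongrightarrow> v t) (at_left t)"
    using tendsto_at_left_of_within_atLeast[OF v_tendsto] at no_C \<open>a < t\<close> by auto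
  ultimately show ?thesis
    using first_integral_left_limit[OF F at(1), of t "v t" m]
      first_integral_right_limit[OF F at(1), of t "v a" m] no_C right_cont by auto
qed simp

end

section \<open>Invariants of the collision dynamics\<close>

lemma locally_finite_times_induct:
  fixes C :: "real set" and P :: "real \<Rightarrow> bool"
  assumes C: "C \<subseteq> {0<..}" "\<And>T. finite (C \<inter> {..T})"
    and start: "P 0"
    and flow: "\<And>a t. a \<le> t \<Longrightarrow> a = 0 \<or> a \<in> C \<Longrightarrow> (\<And>s. a < s \<Longrightarrow> s \<le> t \<Longrightarrow> s \<notin> C) \<Longrightarrow>
      P a \<Longrightarrow> P t"
    and jump: "\<And>a c. 0 \<le> a \<Longrightarrow> a < c \<Longrightarrow> c \<in> C \<Longrightarrow> (\<And>s. a < s \<Longrightarrow> s < c \<Longrightarrow> s \<notin> C) \<Longrightarrow>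
      (\<And>s. a < s \<Longrightarrow> s < c \<Longrightarrow> P s) \<Longrightarrow> P c"
    and t: "0 \<le> t"
  shows "P t"
proof -
  have "P t" if "0 \<le> t" "card (C \<inter> {..t}) = n" for n t
    using that
  proof (induction n arbitrary: t rule: less_induct)
    case (less n t)
    define K where "K = C \<inter> {..t}"
    define c where "c = Max (insert 0 K)"
    have K: "finite K" "K \<subseteq> C"
      using C(2) by (auto simp: K_def)
    have c: "c = 0 \<or> c \<in> C" "c \<le> t" "\<And>s. s \<in> K \<Longrightarrow> s \<le> c"
      using Max_in[of "insert 0 K"] K less.prems(1) by (auto simp: c_def K_def)
    have "P c"
    proof (cases "c = 0")
      case False
      define K' where "K' = C \<inter> {..<c}"
      define a where "a = Max (insert 0 K')"
      have "finite K'"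
        using C(2)[of c] by (rule finite_subset[rotated]) (auto simp: K'_def)
      then have a: "0 \<le> a" "a = 0 \<or> a \<in> K'" "\<And>s. s \<in> K' \<Longrightarrow> s \<le> a"
        using Max_in[of "insert 0 K'"] by (auto simp: a_def)
      have "c \<in> C" "0 < c"
        using c False C(1) by auto
      then have "a < c"
        using a(2) by (auto simp: K'_def)
      moreover have no_C: "s \<notin> C" if "a < s" "s < c" for s
        using a(3)[of s] that by (auto simp: K'_def)
      moreover have "P s" if "a < s" "s < c" for s
      proof (rule less.IH)
        have "C \<inter> {..s} \<subseteq> K' - {c}" "K' - {c} \<subset> K"
          using no_C that c \<open>c \<in> C\<close> by (auto simp: K'_def K_def)
        then show "card (C \<inter> {..s}) < n"
          using K(1) less.prems(2) by (metis K_def card_mono finite_subset le_less_trans psubset_card_mono psubset_imp_subset)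
      qed (use a(1) that in auto)
      ultimately show "P c"
        using jump[OF a(1)] \<open>c \<in> C\<close> by blast
    qed (use start in simp)
    moreover have "s \<notin> C" if "c < s" "s \<le> t" for s
      using c(3)[of s] that by (auto simp: K_def)
    ultimately show "P t"
      using flow c by blast
  qed
  then show ?thesis
    using t by blast
qed

lemma motionE:
  assumes "motion m1 m2 D eps x1 v1 x2 v2"
  obtains C where "C \<subseteq> {0<..}" "\<And>T. finite (C \<inter> {..T})"
    "kepler_body C x1 v1" "kepler_body C x2 v2"
    "\<And>t. t \<in> C \<Longrightarrow> \<exists>u1 u2. (v1 \<longlongrightarrow> u1) (at_left t) \<and> (v2 \<longlongrightarrow> u2) (at_left t) \<and>
      (v1 \<longlongrightarrow> v1 t) (at_right t) \<and> (v2 \<longlongrightarrow> v2 t) (at_right t) \<and>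
      dist (x1 t) (x2 t) = D \<and> (v1 t, v2 t) = post_collision m1 m2 D eps (x1 t) (x2 t) u1 u2"
proof -
  obtain C where C: "C \<subseteq> {0<..}" "\<forall>T. finite (C \<inter> {..T})"
    and cont: "continuous_on {0..} x1" "continuous_on {0..} x2"
    and nz: "\<forall>t\<ge>0. x1 t \<noteq> 0 \<and> x2 t \<noteq> 0 \<and> dist (x1 t) (x2 t) \<ge> D"
    and ode: "\<forall>t. t \<ge> 0 \<and> t \<notin> C \<longrightarrow>
          (x1 has_vector_derivative v1 t) (at t within {0..}) \<and>
          (v1 has_vector_derivative kepler_acc (x1 t)) (at t within {0..}) \<and>
          (x2 has_vector_derivative v2 t) (at t within {0..}) \<and>
          (v2 has_vector_derivative kepler_acc (x2 t)) (at t within {0..})"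
    and col: "\<forall>t\<in>C. \<exists>u1 u2.
          (v1 \<longlongrightarrow> u1) (at_left t) \<and> (v2 \<longlongrightarrow> u2) (at_left t) \<and>
          (v1 \<longlongrightarrow> v1 t) (at_right t) \<and> (v2 \<longlongrightarrow> v2 t) (at_right t) \<and>
          dist (x1 t) (x2 t) = D \<and>
          (let n = (1 / D) *\<^sub>R (x1 t - x2 t); w = u1 - u2; w' = collide_w eps n w;
               v = (m1 / (m1 + m2)) *\<^sub>R u1 + (m2 / (m1 + m2)) *\<^sub>R u2
           in n \<bullet> w < 0 \<and> v1 t = v + (m2 / (m1 + m2)) *\<^sub>R w' \<and> v2 t = v - (m1 / (m1 + m2)) *\<^sub>R w')"
    \<comment> \<open>only the mass ratios are unfolded; full unfolding of the lets makes the proof search explode\<close>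
    using assms unfolding motion_def Let_def[of "m1 / (m1 + m2)"] Let_def[of "m2 / (m1 + m2)"]
    by (elim exE conjE) (rule that)
  have "kepler_body C x1 v1" "kepler_body C x2 v2"
    using cont nz ode by (simp_all add: kepler_body_def)
  moreover have "\<exists>u1 u2. (v1 \<longlongrightarrow> u1) (at_left t) \<and> (v2 \<longlongrightarrow> u2) (at_left t) \<and>
      (v1 \<longlongrightarrow> v1 t) (at_right t) \<and> (v2 \<longlongrightarrow> v2 t) (at_right t) \<and>
      dist (x1 t) (x2 t) = D \<and> (v1 t, v2 t) = post_collision m1 m2 D eps (x1 t) (x2 t) u1 u2"
    if t: "t \<in> C" for t
  proof -
    define mu1 where "mu1 = m1 / (m1 + m2)"
    define mu2 where "mu2 = m2 / (m1 + m2)"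
    define n where "n = (1 / D) *\<^sub>R (x1 t - x2 t)"
    obtain u1 u2 where lim: "(v1 \<longlongrightarrow> u1) (at_left t)" "(v2 \<longlongrightarrow> u2) (at_left t)"
        "(v1 \<longlongrightarrow> v1 t) (at_right t)" "(v2 \<longlongrightarrow> v2 t) (at_right t)" "dist (x1 t) (x2 t) = D"
      and v: "v1 t = (mu1 *\<^sub>R u1 + mu2 *\<^sub>R u2) + mu2 *\<^sub>R collide_w eps n (u1 - u2)"
        "v2 t = (mu1 *\<^sub>R u1 + mu2 *\<^sub>R u2) - mu1 *\<^sub>R collide_w eps n (u1 - u2)"
      using bspec[OF col t] unfolding Let_def mu1_def[symmetric] mu2_def[symmetric] n_def[symmetric]
      by blast
    have "(v1 t, v2 t) = post_collision m1 m2 D eps (x1 t) (x2 t) u1 u2"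
      unfolding post_collision_def Let_def v mu1_def mu2_def n_def ..
    then show ?thesis
      using lim by blast
  qed
  ultimately show ?thesis
    using that C by blast
qed

lemma motion_preserves_invariant:
  fixes Inv :: "real \<Rightarrow> real \<Rightarrow> real \<Rightarrow> real \<Rightarrow> bool"
  assumes motion: "motion m1 m2 D eps x1 v1 x2 v2"
    and start: "Inv (spec_energy (x1 0) (v1 0)) (spec_energy (x2 0) (v2 0))
      (ang_mom (x1 0) (v1 0)) (ang_mom (x2 0) (v2 0))"
    and collision: "\<And>y1 y2 u1 u2 w1 w2. dist y1 y2 = D \<Longrightarrow> y1 \<noteq> 0 \<Longrightarrow> y2 \<noteq> 0 \<Longrightarrow>
      (w1, w2) = post_collision m1 m2 D eps y1 y2 u1 u2 \<Longrightarrow>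
      Inv (spec_energy y1 u1) (spec_energy y2 u2) (ang_mom y1 u1) (ang_mom y2 u2) \<Longrightarrow>
      Inv (spec_energy y1 w1) (spec_energy y2 w2) (ang_mom y1 w1) (ang_mom y2 w2)"
    and t: "0 \<le> t"
  shows "Inv (spec_energy (x1 t) (v1 t)) (spec_energy (x2 t) (v2 t))
    (ang_mom (x1 t) (v1 t)) (ang_mom (x2 t) (v2 t))"
proof -
  obtain C where C: "C \<subseteq> {0<..}" "\<And>T. finite (C \<inter> {..T})"
    and b1: "kepler_body C x1 v1" and b2: "kepler_body C x2 v2"
    and col: "\<And>t. t \<in> C \<Longrightarrow> \<exists>u1 u2. (v1 \<longlongrightarrow> u1) (at_left t) \<and> (v2 \<longlongrightarrow> u2) (at_left t) \<and>
      (v1 \<longlongrightarrow> v1 t) (at_right t) \<and> (v2 \<longlongrightarrow> v2 t) (at_right t) \<and>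
      dist (x1 t) (x2 t) = D \<and> (v1 t, v2 t) = post_collision m1 m2 D eps (x1 t) (x2 t) u1 u2"
    using motionE[OF motion] by blast
  define Q where "Q s \<longleftrightarrow> Inv (spec_energy (x1 s) (v1 s)) (spec_energy (x2 s) (v2 s))
    (ang_mom (x1 s) (v1 s)) (ang_mom (x2 s) (v2 s))" for s
  note E = kepler_first_integral_spec_energy and L = kepler_first_integral_ang_mom
  have "Q t"
  proof (rule locally_finite_times_induct[of C Q, OF C _ _ _ t])
    show "Q 0"
      using start by (simp add: Q_def)
  next
    fix a t
    assume at: "a \<le> t" "a = 0 \<or> a \<in> C" and no_C: "\<And>s. a < s \<Longrightarrow> s \<le> t \<Longrightarrow> s \<notin> C" and "Q a"
    have a: "0 \<le> a"
      using at(2) C(1) by auto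
    have "(v1 \<longlongrightarrow> v1 a) (at_right a)" "(v2 \<longlongrightarrow> v2 a) (at_right a)"
      using at(2) col kepler_body.v_tendsto[OF b1, of 0] kepler_body.v_tendsto[OF b2, of 0] C(1)
      by (auto intro: tendsto_at_right_of_within_atLeast)
    note flow1 = kepler_body.first_integral_flow[OF b1 _ a at(1) no_C this(1)]
      and flow2 = kepler_body.first_integral_flow[OF b2 _ a at(1) no_C this(2)]
    show "Q t"
      using \<open>Q a\<close> by (simp only: Q_def flow1[OF E] flow2[OF E] flow1[OF L] flow2[OF L])
  next
    fix a c
    assume ac: "0 \<le> a" "a < c" "c \<in> C" and no_C: "\<And>s. a < s \<Longrightarrow> s < c \<Longrightarrow> s \<notin> C"
      and before: "\<And>s. a < s \<Longrightarrow> s < c \<Longrightarrow> Q s"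
    obtain u1 u2 where u: "(v1 \<longlongrightarrow> u1) (at_left c)" "(v2 \<longlongrightarrow> u2) (at_left c)"
      and dist: "dist (x1 c) (x2 c) = D"
      and post: "(v1 c, v2 c) = post_collision m1 m2 D eps (x1 c) (x2 c) u1 u2"
      using col[OF ac(3)] by blast
    define m where "m = (a + c) / 2"
    have m: "a < m" "m < c"
      using ac by (auto simp: m_def)
    note left1 = kepler_body.first_integral_left_limit[OF b1 _ ac(1,2) no_C u(1) m]
      and left2 = kepler_body.first_integral_left_limit[OF b2 _ ac(1,2) no_C u(2) m]
    have "Inv (spec_energy (x1 c) u1) (spec_energy (x2 c) u2) (ang_mom (x1 c) u1) (ang_mom (x2 c) u2)"
      using before[OF m] by (simp only: Q_def left1[OF E] left2[OF E] left1[OF L] left2[OF L])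
    moreover have "x1 c \<noteq> 0" "x2 c \<noteq> 0"
      using kepler_body.nonzero[OF b1] kepler_body.nonzero[OF b2] ac by auto
    ultimately show "Q c"
      unfolding Q_def using collision[OF dist _ _ post] by blast
  qed
  then show ?thesis
    by (simp add: Q_def)
qed

lemma gamma_root:
  fixes \<gamma> e :: real
  assumes "1 < \<gamma>" and e: "e = \<gamma> - sqrt (\<gamma>\<^sup>2 - \<gamma> + 1)"
  shows "0 < e" "e < 1/2" "\<gamma> * (1 - 2 * e) = 1 - e\<^sup>2"
proof -
  define s where "s = sqrt (\<gamma>\<^sup>2 - \<gamma> + 1)"
  have q: "\<gamma>\<^sup>2 - \<gamma> + 1 = (\<gamma> - 1/2)\<^sup>2 + 3/4"
    by (simp add: power2_eq_square algebra_simps)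
  then have s2: "s\<^sup>2 = \<gamma>\<^sup>2 - \<gamma> + 1" and s0: "0 \<le> s"
    unfolding s_def by (simp_all add: add_nonneg_nonneg)
  have "s\<^sup>2 < \<gamma>\<^sup>2"
    using s2 assms(1) by simp
  then have "s < \<gamma>"
    using assms(1) power2_less_imp_less[of s \<gamma>] by simp
  then show "0 < e"
    unfolding e s_def[symmetric] by simp
  have "(\<gamma> - 1/2)\<^sup>2 < s\<^sup>2"
    using s2 q by simp
  then have "\<gamma> - 1/2 < s"
    using s0 power2_less_imp_less by blast
  then show "e < 1/2"
    unfolding e s_def[symmetric] by simp
  have "(\<gamma> - e)\<^sup>2 = \<gamma>\<^sup>2 - \<gamma> + 1"
    unfolding e s_def[symmetric] s2[symmetric] by simp
  then show "\<gamma> * (1 - 2 * e) = 1 - e\<^sup>2"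
    by (simp add: power2_eq_square algebra_simps)
qed

theorem theorem3:
  fixes m R1 R2 D eps :: real
    and x1 v1 x2 v2 :: "real \<Rightarrow> real^2"
  assumes "m > 0" and "R1 > 0" and "R2 > 0" and "D = R1 + R2"
    and "0 \<le> eps" and "eps \<le> 1/2"
    and "motion m m D eps x1 v1 x2 v2"
    and "spec_energy (x1 0) (v1 0) < 0" and "spec_energy (x2 0) (v2 0) < 0"
    and "\<gamma> = 2 * L ^ 2 / D" and "\<gamma> > 1"
    and "e = \<gamma> - sqrt (\<gamma> ^ 2 - \<gamma> + 1)"
    and "E = (1/2) * spec_energy (x1 0) (v1 0) + (1/2) * spec_energy (x2 0) (v2 0)"
    and "L = (1/2) * ang_mom (x1 0) (v1 0) + (1/2) * ang_mom (x2 0) (v2 0)"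
    and "E * L ^ 2 < - ((1 - e ^ 2) * (1 + e) ^ 2) / (16 * e ^ 2)"
  shows "\<forall>t\<ge>0. spec_energy (x1 t) (v1 t) < 0 \<and> spec_energy (x2 t) (v2 t) < 0"
proof (intro allI impI)
  fix t :: real
  assume "0 \<le> t"
  have D: "0 < D"
    using assms(2-4) by simp
  note e = gamma_root[OF assms(11,12)]
  have \<gamma>D: "\<gamma> * D = 2 * L\<^sup>2"
    using assms(10) D by simp
  have L: "L \<noteq> 0" "D * (1 - e\<^sup>2) = 2 * L\<^sup>2 * (1 - 2 * e)"
  proof -
    show "L \<noteq> 0"
      using \<gamma>D assms(11) D by auto
    show "D * (1 - e\<^sup>2) = 2 * L\<^sup>2 * (1 - 2 * e)"
      unfolding e(3)[symmetric] \<gamma>D[symmetric] by (simp add: ac_simps)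
  qed
  have "elliptic_state E L (spec_energy (x1 t) (v1 t)) (spec_energy (x2 t) (v2 t))
      (ang_mom (x1 t) (v1 t)) (ang_mom (x2 t) (v2 t))"
  proof (rule motion_preserves_invariant[OF assms(7) _ _ \<open>0 \<le> t\<close>])
    show "elliptic_state E L (spec_energy (x1 0) (v1 0)) (spec_energy (x2 0) (v2 0))
        (ang_mom (x1 0) (v1 0)) (ang_mom (x2 0) (v2 0))"
      using assms(8,9,13,14) by (simp add: elliptic_state_def)
  qed (rule collision_keeps_elliptic[OF _ _ _ assms(1) D assms(5)]; use assms(6,15) e L in auto)
  then show "spec_energy (x1 t) (v1 t) < 0 \<and> spec_energy (x2 t) (v2 t) < 0"
    by (simp add: elliptic_state_def)
qed

end
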